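(* Let $\mathbb G$ be a symmetric directed graph on $m$ vertices (no self-arcs) with arcs enumerated $e_1,\dots,e_d$, each carrying a real matrix $C_{e_k}$ with $n$ columns, and let $C=\operatorname{blockdiag}(C_{e_1},\dots,C_{e_d})$. Let $\mathbb G_1,\dots,\mathbb G_p$ be symmetric spanning subgraphs of $\mathbb G$ whose union is $\mathbb G$. Let $J$ be the incidence matrix of $\mathbb G$, $J_i$ the spanning incidence matrix of $\mathbb G_i$, and $W_i$ the spanning weight matrix of $\mathbb G_i$; set $\bar J=J\otimes I_n$, $\bar J_i=J_i\otimes I_n$, $\bar W_i=W_i\otimes I_n$. Then $$\ker\big(C\bar J'\big)=\ker\Big(C\sum_{i=1}^p\bar W_i^{1/2}\bar J_i'\Big).$$
   Context: A directed graph is symmetric if whenever $(i,j)$ is an arc so is $(j,i)$. Incidence matrix $J\in\mathbb R^{m\times d}$: column $k$ has $+1$ in row $i$ and $-1$ in row $j$ when $e_k=(j,i)$. Spanning incidence matrix of a spanning subgraph $\mathbb H$: same as $J$ except that column $k$ is zero when $e_k$ is not an arc of $\mathbb H$. Spanning weight matrix of a symmetric spanning subgraph $\mathbb H$: the $d\times d$ diagonal matrix whose $k$th diagonal entry is $1/(1+\max\{\bar d_i,\bar d_j\})$ if $e_k=(j,i)$ is an arc of $\mathbb H$ (with $\bar d_v$ the number of neighbors of $v$ in $\mathbb H$), and $0$ otherwise. $'$ denotes transpose. *)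

theory Defs
  imports "Jordan_Normal_Form.Matrix_Kernel"
begin

text \<open>Vertices are 0..<m; the arcs e_1,...,e_d of G are the entries es!0, ..., es!(d-1)
  of a list es; an arc (j,i) goes from j to i.  A spanning subgraph H is given by its arc set.\<close>

definition incidence_mat :: "nat \<Rightarrow> (nat \<times> nat) list \<Rightarrow> real mat" where
  "incidence_mat m es = mat m (length es)
     (\<lambda>(v,k). if v = snd (es!k) then 1 else if v = fst (es!k) then -1 else 0)"

definition span_incidence_mat :: "nat \<Rightarrow> (nat \<times> nat) list \<Rightarrow> (nat \<times> nat) set \<Rightarrow> real mat" where
  "span_incidence_mat m es H = mat m (length es)
     (\<lambda>(v,k). if es!k \<in> H then
                (if v = snd (es!k) then 1 else if v = fst (es!k) then -1 else 0)
              else 0)"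

definition nbr_count :: "(nat \<times> nat) set \<Rightarrow> nat \<Rightarrow> nat" where
  "nbr_count H v = card {u. (u, v) \<in> H}"

definition span_weight_mat :: "(nat \<times> nat) list \<Rightarrow> (nat \<times> nat) set \<Rightarrow> real mat" where
  "span_weight_mat es H = mat (length es) (length es)
     (\<lambda>(k,l). if k = l \<and> es!k \<in> H then
                1 / (1 + real (max (nbr_count H (snd (es!k))) (nbr_count H (fst (es!k)))))
              else 0)"

definition kron :: "real mat \<Rightarrow> real mat \<Rightarrow> real mat" where
  "kron A B = mat (dim_row A * dim_row B) (dim_col A * dim_col B)
     (\<lambda>(r,c). A $$ (r div dim_row B, c div dim_col B) * B $$ (r mod dim_row B, c mod dim_col B))"

text \<open>Square root of a diagonal matrix with nonnegative diagonal (its unique PSD square root).\<close>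
definition diag_sqrt :: "real mat \<Rightarrow> real mat" where
  "diag_sqrt W = mat (dim_row W) (dim_col W) (\<lambda>(k,l). if k = l then sqrt (W $$ (k,k)) else 0)"

definition mat_sum_list :: "nat \<Rightarrow> nat \<Rightarrow> real mat list \<Rightarrow> real mat" where
  "mat_sum_list r c As = foldr (+) As (0\<^sub>m r c)"

end

theory Submission
  imports Defs
begin

text \<open>Row block k of the i-th summand is row block k of J' scaled by the square root of the
  i-th weight of arc k: that weight vanishes exactly when e_k is not an arc of G_i, and otherwise
  column k of J_i is column k of J.  Hence the sum equals (S \<otimes> I_n) J' with S diagonal
  and S_kk > 0, because every arc lies in some G_i (this covering is the only hypothesis on the
  graphs that matters).  Block-diagonal scalar factors of block size n pass through C, turning
  S \<otimes> I_n into an invertible block-scalar matrix on the left of C J', which leaves the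
  kernel unchanged.\<close>

lemma mult_four_block_diag_mat:
  fixes A B DA DB :: "'a :: semiring_0 mat"
  assumes "A \<in> carrier_mat r k" "B \<in> carrier_mat k c"
    and "DA \<in> carrier_mat R K" "DB \<in> carrier_mat K C"
  shows "four_block_mat A (0\<^sub>m r K) (0\<^sub>m R k) DA * four_block_mat B (0\<^sub>m k C) (0\<^sub>m K c) DB
       = four_block_mat (A * B) (0\<^sub>m r C) (0\<^sub>m R c) (DA * DB)"
  using assms by (subst mult_four_block_mat[of _ r k _ K _ R _ _ c _ C]) auto

lemma diag_block_mat_map_mult:
  fixes A B :: "'b \<Rightarrow> 'a :: semiring_0 mat"
  assumes "\<And>x. x \<in> set xs \<Longrightarrow> dim_col (A x) = dim_row (B x)"
  shows "diag_block_mat (map A xs) * diag_block_mat (map B xs)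
       = diag_block_mat (map (\<lambda>x. A x * B x) xs)"
  using assms
proof (induction xs)
  case Nil
  show ?case by (auto intro!: eq_matI)
next
  case (Cons x xs)
  let ?DA = "diag_block_mat (map A xs)" and ?DB = "diag_block_mat (map B xs)"
  have IH: "?DA * ?DB = diag_block_mat (map (\<lambda>x. A x * B x) xs)"
    using Cons by auto
  have A: "A x \<in> carrier_mat (dim_row (A x)) (dim_row (B x))"
    and B: "B x \<in> carrier_mat (dim_row (B x)) (dim_col (B x))"
    using Cons.prems by auto
  have DA: "?DA \<in> carrier_mat (dim_row ?DA) (dim_row ?DB)"
    and DB: "?DB \<in> carrier_mat (dim_row ?DB) (dim_col ?DB)"
    using Cons.prems by (auto simp: dim_diag_block_mat o_def cong: map_cong)
  have e1: "dim_col (A x) = dim_row (B x)" and e2: "dim_col ?DA = dim_row ?DB"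
    using A DA by auto
  show ?case
    unfolding list.map diag_block_mat.simps Let_def e1 e2 IH[symmetric]
    by (simp only: mult_four_block_diag_mat[OF A B DA DB] index_mult_mat(2,3))
qed

lemma diagonal_mat_mult_index:
  fixes D B :: "'a :: semiring_0 mat"
  assumes "diagonal_mat D" "D \<in> carrier_mat r r" "B \<in> carrier_mat r c" "i < r" "j < c"
  shows "(D * B) $$ (i, j) = D $$ (i, i) * B $$ (i, j)"
proof -
  have "(D * B) $$ (i, j) = (\<Sum>l = 0..<r. D $$ (i, l) * B $$ (l, j))"
    using assms(2-5) by (simp add: scalar_prod_def)
  also have "\<dots> = (\<Sum>l = 0..<r. if l = i then D $$ (i, i) * B $$ (i, j) else 0)"
    using assms(1,2,4) by (intro sum.cong) (auto simp: diagonal_mat_def)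
  finally show ?thesis using assms(4) by simp
qed

lemma diag_block_mat_smult_one_mat:
  fixes c :: "'b \<Rightarrow> 'a :: semiring_1"
  shows "diag_block_mat (map (\<lambda>x. c x \<cdot>\<^sub>m 1\<^sub>m n) xs)
       = mat (length xs * n) (length xs * n) (\<lambda>(i, j). if i = j then c (xs ! (i div n)) else 0)"
proof (induction xs)
  case Nil
  show ?case by (auto intro!: eq_matI)
next
  case (Cons x xs)
  let ?D = "diag_block_mat (map (\<lambda>x. c x \<cdot>\<^sub>m 1\<^sub>m n) xs)"
  have "diag_block_mat (map (\<lambda>x. c x \<cdot>\<^sub>m 1\<^sub>m n) (x # xs)) $$ (i, j)
      = (if i = j then c ((x # xs) ! (i div n)) else 0)"
    if i: "i < n + length xs * n" and j: "j < n + length xs * n" for i j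
  proof -
    have shift: "(x # xs) ! (i div n) = xs ! ((i - n) div n)" if "n \<le> i"
      using that i le_div_geq[of n i] by (cases "n = 0") auto
    have "diag_block_mat (map (\<lambda>x. c x \<cdot>\<^sub>m 1\<^sub>m n) (x # xs)) $$ (i, j)
        = (if i < n then if j < n then (c x \<cdot>\<^sub>m 1\<^sub>m n) $$ (i, j) else 0
           else if j < n then 0 else ?D $$ (i - n, j - n))"
      using i j by (simp add: Let_def Cons.IH)
    also have "\<dots> = (if i = j then c ((x # xs) ! (i div n)) else 0)"
      using i j shift by (auto simp: Cons.IH)
    finally show ?thesis .
  qed
  then show ?case
    by (intro eq_matI) (simp_all add: Let_def Cons.IH)
qed

lemma diag_block_mat_mult_smult_one_mat_commute:
  fixes A :: "'b \<Rightarrow> 'a :: comm_semiring_1 mat"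
  assumes "\<And>x. x \<in> set xs \<Longrightarrow> dim_col (A x) = n"
  shows "diag_block_mat (map A xs) * diag_block_mat (map (\<lambda>x. c x \<cdot>\<^sub>m 1\<^sub>m n) xs)
       = diag_block_mat (map (\<lambda>x. c x \<cdot>\<^sub>m 1\<^sub>m (dim_row (A x))) xs) * diag_block_mat (map A xs)"
proof -
  have "A x * (c x \<cdot>\<^sub>m 1\<^sub>m n) = (c x \<cdot>\<^sub>m 1\<^sub>m (dim_row (A x))) * A x" if "x \<in> set xs" for x
  proof -
    have A: "A x \<in> carrier_mat (dim_row (A x)) n" using assms that by auto
    have "A x * (c x \<cdot>\<^sub>m 1\<^sub>m n) = c x \<cdot>\<^sub>m A x"
      using mult_smult_distrib[OF A one_carrier_mat] right_mult_one_mat[OF A] by simp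
    moreover have "(c x \<cdot>\<^sub>m 1\<^sub>m (dim_row (A x))) * A x = c x \<cdot>\<^sub>m A x"
      using mult_smult_assoc_mat[OF one_carrier_mat A] left_mult_one_mat[OF A] by simp
    ultimately show ?thesis by simp
  qed
  then show ?thesis
    using assms
    by (simp only: diag_block_mat_map_mult index_smult_mat index_one_mat cong: map_cong)
qed

lemma diag_block_mat_smult_one_mat_inverse:
  fixes c :: "'b \<Rightarrow> 'a :: field"
  assumes "\<And>x. x \<in> set xs \<Longrightarrow> c x \<noteq> 0"
  shows "diag_block_mat (map (\<lambda>x. inverse (c x) \<cdot>\<^sub>m 1\<^sub>m (r x)) xs)
         * diag_block_mat (map (\<lambda>x. c x \<cdot>\<^sub>m 1\<^sub>m (r x)) xs)
       = 1\<^sub>m (sum_list (map r xs))"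
proof -
  have "(inverse (c x) \<cdot>\<^sub>m 1\<^sub>m (r x)) * (c x \<cdot>\<^sub>m 1\<^sub>m (r x)) = 1\<^sub>m (r x)" if "x \<in> set xs" for x
  proof -
    have "(inverse (c x) \<cdot>\<^sub>m 1\<^sub>m (r x)) * (c x \<cdot>\<^sub>m 1\<^sub>m (r x))
        = inverse (c x) \<cdot>\<^sub>m (c x \<cdot>\<^sub>m 1\<^sub>m (r x))"
      by (simp add: mult_smult_assoc_mat[OF one_carrier_mat smult_carrier_mat[OF one_carrier_mat]])
    also have "\<dots> = 1\<^sub>m (r x)"
      using assms[OF that] by (intro eq_matI) auto
    finally show ?thesis .
  qed
  then have "diag_block_mat (map (\<lambda>x. inverse (c x) \<cdot>\<^sub>m 1\<^sub>m (r x)) xs)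
         * diag_block_mat (map (\<lambda>x. c x \<cdot>\<^sub>m 1\<^sub>m (r x)) xs)
       = diag_block_mat (map (\<lambda>x. 1\<^sub>m (r x)) xs)"
    by (simp only: diag_block_mat_map_mult index_smult_mat index_one_mat cong: map_cong)
  also have "\<dots> = 1\<^sub>m (sum_list (map r xs))"
    using diag_block_one_mat[of "map (\<lambda>x. 1\<^sub>m (r x)) xs"] by (simp add: o_def)
  finally show ?thesis .
qed

lemma mat_kernel_diag_block_mat_mult_smult_one_mat:
  fixes Cs :: "'b \<Rightarrow> 'a :: field mat"
  assumes C_cols: "\<And>x. x \<in> set xs \<Longrightarrow> dim_col (Cs x) = n"
    and c_nonzero: "\<And>x. x \<in> set xs \<Longrightarrow> c x \<noteq> 0"
    and A: "A \<in> carrier_mat (length xs * n) nc"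
  shows "mat_kernel (diag_block_mat (map Cs xs) * (diag_block_mat (map (\<lambda>x. c x \<cdot>\<^sub>m 1\<^sub>m n) xs) * A))
       = mat_kernel (diag_block_mat (map Cs xs) * A)"
proof -
  let ?C = "diag_block_mat (map Cs xs)"
  let ?S = "diag_block_mat (map (\<lambda>x. c x \<cdot>\<^sub>m 1\<^sub>m n) xs)"
  let ?R = "\<Sum>x\<leftarrow>xs. dim_row (Cs x)"
  let ?Sr = "diag_block_mat (map (\<lambda>x. c x \<cdot>\<^sub>m 1\<^sub>m (dim_row (Cs x))) xs)"
  let ?Sr_inv = "diag_block_mat (map (\<lambda>x. inverse (c x) \<cdot>\<^sub>m 1\<^sub>m (dim_row (Cs x))) xs)"
  have C: "?C \<in> carrier_mat ?R (length xs * n)"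
  proof
    show "dim_row ?C = ?R" by (simp add: dim_diag_block_mat o_def)
    have "dim_col ?C = (\<Sum>x\<leftarrow>xs. n)"
      unfolding dim_diag_block_mat map_map o_def using C_cols by (intro arg_cong[where f = sum_list]) simp
    then show "dim_col ?C = length xs * n" by (simp add: sum_list_triv)
  qed
  have S: "?S \<in> carrier_mat (length xs * n) (length xs * n)"
    by (simp add: diag_block_mat_smult_one_mat)
  have Sr: "?Sr \<in> carrier_mat ?R ?R" and Sr_inv: "?Sr_inv \<in> carrier_mat ?R ?R"
    unfolding carrier_mat_def by (simp_all add: dim_diag_block_mat o_def)
  have "?C * (?S * A) = (?C * ?S) * A"
    using assoc_mult_mat[OF C S A] by simp
  also have "?C * ?S = ?Sr * ?C"
    using C_cols by (rule diag_block_mat_mult_smult_one_mat_commute)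
  also have "(?Sr * ?C) * A = ?Sr * (?C * A)"
    using assoc_mult_mat[OF Sr C A] .
  finally have "?C * (?S * A) = ?Sr * (?C * A)" .
  moreover have "?Sr_inv * ?Sr = 1\<^sub>m ?R"
    using c_nonzero by (rule diag_block_mat_smult_one_mat_inverse)
  ultimately show ?thesis
    using mat_kernel_mult_eq[OF mult_carrier_mat[OF C A] Sr Sr_inv] by simp
qed

lemma mat_sum_list_carrier:
  assumes "\<And>A. A \<in> set As \<Longrightarrow> A \<in> carrier_mat r c"
  shows "mat_sum_list r c As \<in> carrier_mat r c"
  using assms unfolding mat_sum_list_def by (induction As) auto

lemma index_mat_sum_list:
  assumes "\<And>A. A \<in> set As \<Longrightarrow> A \<in> carrier_mat r c" "i < r" "j < c"
  shows "mat_sum_list r c As $$ (i, j) = (\<Sum>A\<leftarrow>As. A $$ (i, j))"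
  using assms
proof (induction As)
  case (Cons A As)
  have "mat_sum_list r c As \<in> carrier_mat r c"
    using Cons.prems(1) by (intro mat_sum_list_carrier) auto
  with Cons show ?case by (simp add: mat_sum_list_def)
qed (simp add: mat_sum_list_def)

lemma diagonal_mat_diag_sqrt: "diagonal_mat (diag_sqrt W)"
  by (simp add: diagonal_mat_def diag_sqrt_def)

lemma index_diag_sqrt_kron_one_mat:
  assumes "W \<in> carrier_mat d d" "i < d * n"
  shows "diag_sqrt (kron W (1\<^sub>m n)) $$ (i, i) = sqrt (W $$ (i div n, i div n))"
proof -
  have "0 < n" using assms(2) by (cases n) auto
  then show ?thesis using assms by (simp add: diag_sqrt_def kron_def)
qed

lemma span_weight_zero_or_span_incidence_eq:
  assumes "k < length es" "v < m"
  shows "span_weight_mat es H $$ (k, k) = 0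
       \<or> span_incidence_mat m es H $$ (v, k) = incidence_mat m es $$ (v, k)"
  using assms by (simp add: span_weight_mat_def span_incidence_mat_def incidence_mat_def)

lemma sqrt_weight_span_incidence_index:
  assumes i: "i < length es * n" and j: "j < m * n"
  shows "(diag_sqrt (kron (span_weight_mat es H) (1\<^sub>m n))
           * transpose_mat (kron (span_incidence_mat m es H) (1\<^sub>m n))) $$ (i, j)
       = sqrt (span_weight_mat es H $$ (i div n, i div n))
           * transpose_mat (kron (incidence_mat m es) (1\<^sub>m n)) $$ (i, j)"
proof -
  have "0 < n" using i by (cases n) auto
  then have k: "i div n < length es" and v: "j div n < m"
    using i j by (simp_all add: less_mult_imp_div_less)
  have W: "span_weight_mat es H \<in> carrier_mat (length es) (length es)"
    by (simp add: span_weight_mat_def)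
  have D: "diag_sqrt (kron (span_weight_mat es H) (1\<^sub>m n)) \<in> carrier_mat (length es * n) (length es * n)"
    and B: "transpose_mat (kron (span_incidence_mat m es H) (1\<^sub>m n)) \<in> carrier_mat (length es * n) (m * n)"
    by (simp_all add: diag_sqrt_def kron_def span_weight_mat_def span_incidence_mat_def)
  have "(diag_sqrt (kron (span_weight_mat es H) (1\<^sub>m n))
           * transpose_mat (kron (span_incidence_mat m es H) (1\<^sub>m n))) $$ (i, j)
      = sqrt (span_weight_mat es H $$ (i div n, i div n))
           * transpose_mat (kron (span_incidence_mat m es H) (1\<^sub>m n)) $$ (i, j)"
    by (simp add: diagonal_mat_mult_index[OF diagonal_mat_diag_sqrt D B i j]
        index_diag_sqrt_kron_one_mat[OF W i])
  also have "\<dots> = sqrt (span_weight_mat es H $$ (i div n, i div n))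
           * transpose_mat (kron (incidence_mat m es) (1\<^sub>m n)) $$ (i, j)"
    using span_weight_zero_or_span_incidence_eq[OF k v, of H]
  proof
    assume "span_incidence_mat m es H $$ (j div n, i div n) = incidence_mat m es $$ (j div n, i div n)"
    then show ?thesis
      using i j by (simp add: kron_def span_incidence_mat_def incidence_mat_def)
  qed simp
  finally show ?thesis .
qed

lemma mat_sum_list_sqrt_weight_span_incidence:
  assumes "length es = d"
  shows "mat_sum_list (d * n) (m * n)
           (map (\<lambda>q. diag_sqrt (kron (span_weight_mat es (Gs q)) (1\<^sub>m n))
                     * transpose_mat (kron (span_incidence_mat m es (Gs q)) (1\<^sub>m n))) qs)
       = diag_block_mat (map (\<lambda>k. (\<Sum>q\<leftarrow>qs. sqrt (span_weight_mat es (Gs q) $$ (k, k))) \<cdot>\<^sub>m 1\<^sub>m n)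
                          [0..<d])
           * transpose_mat (kron (incidence_mat m es) (1\<^sub>m n))"
  (is "mat_sum_list _ _ (map ?T qs) = ?D * ?A")
proof -
  define s where "s k = (\<Sum>q\<leftarrow>qs. sqrt (span_weight_mat es (Gs q) $$ (k, k)))" for k
  have D: "?D = mat (d * n) (d * n) (\<lambda>(i, j). if i = j then s (i div n) else 0)"
    unfolding s_def diag_block_mat_smult_one_mat[of _ n "[0..<d]"]
    by (intro eq_matI) (auto simp: less_mult_imp_div_less)
  have A: "?A \<in> carrier_mat (d * n) (m * n)"
    using assms by (simp add: kron_def incidence_mat_def)
  have T: "?T q \<in> carrier_mat (d * n) (m * n)" for q
    using assms by (intro mult_carrier_mat[of _ _ "d * n"])
      (simp_all add: diag_sqrt_def kron_def span_weight_mat_def span_incidence_mat_def)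
  show ?thesis
  proof (rule eq_matI)
    fix i j
    assume "i < dim_row (?D * ?A)" "j < dim_col (?D * ?A)"
    then have i: "i < d * n" and j: "j < m * n" using A by (simp_all add: D)
    have "mat_sum_list (d * n) (m * n) (map ?T qs) $$ (i, j) = (\<Sum>q\<leftarrow>qs. ?T q $$ (i, j))"
      using index_mat_sum_list[of "map ?T qs" "d * n" "m * n" i j] T i j by (auto simp: o_def)
    also have "\<dots> = s (i div n) * ?A $$ (i, j)"
      using i j assms
      by (simp add: sqrt_weight_span_incidence_index s_def sum_list_mult_const)
    also have "\<dots> = (?D * ?A) $$ (i, j)"
      using diagonal_mat_mult_index[of ?D "d * n" ?A "m * n" i j] A i j
      by (simp add: D diagonal_mat_def)
    finally show "mat_sum_list (d * n) (m * n) (map ?T qs) $$ (i, j) = (?D * ?A) $$ (i, j)" .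
  qed (use A T mat_sum_list_carrier[of "map ?T qs"] in \<open>auto simp: D\<close>)
qed

lemma sum_list_sqrt_span_weight_pos:
  assumes "k < length es" "es ! k \<in> (\<Union>q\<in>set qs. Gs q)"
  shows "0 < (\<Sum>q\<leftarrow>qs. sqrt (span_weight_mat es (Gs q) $$ (k, k)))"
proof -
  obtain q where q: "q \<in> set qs" "es ! k \<in> Gs q" using assms(2) by blast
  then have "0 < sqrt (span_weight_mat es (Gs q) $$ (k, k))"
    using assms(1) by (simp add: span_weight_mat_def)
  also have "\<dots> \<le> (\<Sum>q\<leftarrow>qs. sqrt (span_weight_mat es (Gs q) $$ (k, k)))"
    using q assms(1) by (intro member_le_sum_list) (auto simp: span_weight_mat_def)
  finally show ?thesis .
qed

theorem lemma9:
  fixes m n d p :: nat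
    and es :: "(nat \<times> nat) list"
    and Cs :: "nat \<Rightarrow> real mat"
    and Gs :: "nat \<Rightarrow> (nat \<times> nat) set"
  assumes arcs_len: "length es = d"
    and arcs_distinct: "distinct es"
    and arcs_valid: "\<forall>(j, i) \<in> set es. j < m \<and> i < m \<and> j \<noteq> i"
    and G_symmetric: "\<forall>(j, i) \<in> set es. (i, j) \<in> set es"
    and C_cols: "\<forall>k < d. dim_col (Cs k) = n"
    and sub_spanning: "\<forall>q < p. Gs q \<subseteq> set es"
    and sub_symmetric: "\<forall>q < p. \<forall>(j, i) \<in> Gs q. (i, j) \<in> Gs q"
    and sub_union: "(\<Union>q < p. Gs q) = set es"
  shows "mat_kernel (diag_block_mat (map Cs [0..<d])
                       * transpose_mat (kron (incidence_mat m es) (1\<^sub>m n)))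
       = mat_kernel (diag_block_mat (map Cs [0..<d])
                       * mat_sum_list (d * n) (m * n)
                           (map (\<lambda>q. diag_sqrt (kron (span_weight_mat es (Gs q)) (1\<^sub>m n))
                                      * transpose_mat (kron (span_incidence_mat m es (Gs q)) (1\<^sub>m n)))
                                [0..<p]))"
proof -
  define s where "s k = (\<Sum>q\<leftarrow>[0..<p]. sqrt (span_weight_mat es (Gs q) $$ (k, k)))" for k
  have s_nonzero: "s k \<noteq> 0" if "k \<in> set [0..<d]" for k
  proof -
    have "es ! k \<in> (\<Union>q\<in>set [0..<p]. Gs q)"
      using that arcs_len sub_union by (auto simp: atLeast0LessThan)
    then show ?thesis
      using sum_list_sqrt_span_weight_pos[of k es Gs "[0..<p]"] that arcs_len
      unfolding s_def by simp
  qed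
  have "transpose_mat (kron (incidence_mat m es) (1\<^sub>m n)) \<in> carrier_mat (d * n) (m * n)"
    using arcs_len by (simp add: kron_def incidence_mat_def)
  then have "mat_kernel (diag_block_mat (map Cs [0..<d])
        * (diag_block_mat (map (\<lambda>k. s k \<cdot>\<^sub>m 1\<^sub>m n) [0..<d])
           * transpose_mat (kron (incidence_mat m es) (1\<^sub>m n))))
      = mat_kernel (diag_block_mat (map Cs [0..<d]) * transpose_mat (kron (incidence_mat m es) (1\<^sub>m n)))"
    using C_cols s_nonzero by (intro mat_kernel_diag_block_mat_mult_smult_one_mat) auto
  then show ?thesis
    unfolding mat_sum_list_sqrt_weight_span_incidence[OF arcs_len] s_def by simp
qed

end
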